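(* For $\varepsilon\in(0,1/2)$, any procedure that, given independent copies of two unknown pure quantum states $\ket{\varphi}$ and $\ket{\psi}$, estimates their trace distance $\mathrm{T}(\ket{\varphi},\ket{\psi})$ to within additive error $\varepsilon$ with probability at least $2/3$ (for all pairs of pure states) requires $\Omega(1/\varepsilon^2)$ independent samples of them.
   Context: For pure states, $\mathrm{T}(\ket{\varphi},\ket{\psi})=\tfrac12\operatorname{tr}\bigl|\ket{\varphi}\bra{\varphi}-\ket{\psi}\bra{\psi}\bigr|=\sqrt{1-|\braket{\varphi}{\psi}|^2}$. Sample access: the procedure receives $S$ copies of each state (i.e., $\ket{\varphi}^{\otimes S}\otimes\ket{\psi}^{\otimes S}$) and may perform any quantum operation/measurement on them; $S$ is the sample complexity. *)

theory Defs
  imports "HOL-Analysis.Analysis"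
begin

text \<open>Pure states on C^d are represented as functions nat => complex, of which
only the entries 0..d-1 are used. Basis vectors of the n-fold tensor product
(C^d)^{\<otimes> n} are indexed by lists of length n with entries < d.
Operators on it are functions nat list => nat list => complex (matrix entries).\<close>

definition idx :: "nat \<Rightarrow> nat \<Rightarrow> nat list set" where
  "idx d n = {is. length is = n \<and> set is \<subseteq> {..<d}}"

definition inner_d :: "nat \<Rightarrow> (nat \<Rightarrow> complex) \<Rightarrow> (nat \<Rightarrow> complex) \<Rightarrow> complex" where
  "inner_d d u v = (\<Sum>i<d. cnj (u i) * v i)"

definition unit_state :: "nat \<Rightarrow> (nat \<Rightarrow> complex) \<Rightarrow> bool" where
  "unit_state d u \<longleftrightarrow> (\<Sum>i<d. (cmod (u i))\<^sup>2) = 1"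

definition trace_dist :: "nat \<Rightarrow> (nat \<Rightarrow> complex) \<Rightarrow> (nat \<Rightarrow> complex) \<Rightarrow> real" where
  "trace_dist d u v = sqrt (1 - (cmod (inner_d d u v))\<^sup>2)"

text \<open>Amplitudes of the state |phi>^{\<otimes> S} \<otimes> |psi>^{\<otimes> S} on index lists of length 2S.\<close>
definition copies_state :: "nat \<Rightarrow> (nat \<Rightarrow> complex) \<Rightarrow> (nat \<Rightarrow> complex) \<Rightarrow> nat list \<Rightarrow> complex" where
  "copies_state S u v is = (\<Prod>k<S. u (is ! k)) * (\<Prod>k<S. v (is ! (S + k)))"

definition psd_on :: "nat list set \<Rightarrow> (nat list \<Rightarrow> nat list \<Rightarrow> complex) \<Rightarrow> bool" where
  "psd_on I E \<longleftrightarrow> (\<forall>w. (\<Sum>i\<in>I. \<Sum>j\<in>I. cnj (w i) * E i j * w j) \<in> \<real> \<and>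
                          Re (\<Sum>i\<in>I. \<Sum>j\<in>I. cnj (w i) * E i j * w j) \<ge> 0)"

definition povm :: "nat \<Rightarrow> nat \<Rightarrow> (real set \<Rightarrow> nat list \<Rightarrow> nat list \<Rightarrow> complex) \<Rightarrow> bool" where
  "povm d n M \<longleftrightarrow>
     (\<forall>A \<in> sets borel. psd_on (idx d n) (M A)) \<and>
     (\<forall>i\<in>idx d n. \<forall>j\<in>idx d n. M UNIV i j = (if i = j then 1 else 0)) \<and>
     (\<forall>A \<in> sets borel. \<forall>B \<in> sets borel. A \<inter> B = {} \<longrightarrow>
        (\<forall>i\<in>idx d n. \<forall>j\<in>idx d n. M (A \<union> B) i j = M A i j + M B i j))"

definition outcome_prob :: "nat \<Rightarrow> nat \<Rightarrow> (real set \<Rightarrow> nat list \<Rightarrow> nat list \<Rightarrow> complex)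
     \<Rightarrow> (nat list \<Rightarrow> complex) \<Rightarrow> real set \<Rightarrow> real" where
  "outcome_prob d n M w A = Re (\<Sum>i\<in>idx d n. \<Sum>j\<in>idx d n. cnj (w i) * M A i j * w j)"

definition td_estimator :: "nat \<Rightarrow> nat \<Rightarrow> real \<Rightarrow> (real set \<Rightarrow> nat list \<Rightarrow> nat list \<Rightarrow> complex) \<Rightarrow> bool" where
  "td_estimator d S eps M \<longleftrightarrow> povm d (2 * S) M \<and>
     (\<forall>u v. unit_state d u \<longrightarrow> unit_state d v \<longrightarrow>
        outcome_prob d (2 * S) M (copies_state S u v)
          {x. \<bar>x - trace_dist d u v\<bar> \<le> eps} \<ge> 2 / 3)"

end

theory Submission
  imports Defs
begin

text \<open>Le Cam's two-point method. The pairs (u, u) and (u, v), with overlap c = <u, v>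
close to 1, have trace distances 0 and s = sqrt (1 - c^2) > 2 eps, so an estimator
distinguishes S copies of them with advantage 1/3. A POVM element 0 \<le> E \<le> 1 cannot
distinguish two unit vectors much better than their distance allows; here the distance
is ||u^S \<otimes> u^S - u^S \<otimes> v^S||^2 = 2 - 2 c^S, and 1 - c^S \<le> S (1 - c) \<le> S s^2 = O(S eps^2).\<close>

definition inner_on :: "'a set \<Rightarrow> ('a \<Rightarrow> complex) \<Rightarrow> ('a \<Rightarrow> complex) \<Rightarrow> complex" where
  "inner_on I x y = (\<Sum>i\<in>I. cnj (x i) * y i)"

definition norm2_on :: "'a set \<Rightarrow> ('a \<Rightarrow> complex) \<Rightarrow> real" where
  "norm2_on I x = (\<Sum>i\<in>I. (cmod (x i))\<^sup>2)"

definition quad_form :: "'a set \<Rightarrow> ('a \<Rightarrow> 'a \<Rightarrow> complex) \<Rightarrow> ('a \<Rightarrow> complex) \<Rightarrow> complex" where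
  "quad_form I E x = (\<Sum>i\<in>I. \<Sum>j\<in>I. cnj (x i) * E i j * x j)"

lemma inner_on_self: "inner_on I x x = of_real (norm2_on I x)"
  unfolding inner_on_def norm2_on_def
  by (simp add: complex_norm_square mult.commute del: of_real_power)

lemma norm2_on_diff:
  "norm2_on I (\<lambda>i. y i - x i) = norm2_on I x + norm2_on I y - 2 * Re (inner_on I x y)"
proof -
  have "inner_on I (\<lambda>i. y i - x i) (\<lambda>i. y i - x i)
      = inner_on I y y - inner_on I y x - inner_on I x y + inner_on I x x"
    unfolding inner_on_def by (simp add: algebra_simps sum.distrib sum_subtractf)
  then have "norm2_on I (\<lambda>i. y i - x i)
      = norm2_on I y - Re (inner_on I y x) - Re (inner_on I x y) + norm2_on I x"
    unfolding inner_on_self by (metis Re_complex_of_real minus_complex.sel(1) plus_complex.sel(1))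
  moreover have "Re (inner_on I y x) = Re (inner_on I x y)"
    unfolding inner_on_def by (simp add: mult.commute)
  ultimately show ?thesis by simp
qed

lemma quad_form_polarization:
  fixes a b :: real and v w :: "'a \<Rightarrow> complex"
  assumes "a * b = 1"
  shows "quad_form I E (\<lambda>i. v i + w i) = quad_form I E v + quad_form I E w +
     (quad_form I E (\<lambda>i. a * v i + b * w i) - quad_form I E (\<lambda>i. a * v i - b * w i)) / 2"
proof -
  have ab: "complex_of_real a * complex_of_real b = 1"
    using assms by (metis of_real_1 of_real_mult)
  have "cnj (v i + w i) * E i j * (v j + w j) = cnj (v i) * E i j * v j + cnj (w i) * E i j * w j +
     (cnj (a * v i + b * w i) * E i j * (a * v j + b * w j)
      - cnj (a * v i - b * w i) * E i j * (a * v j - b * w j)) / 2" for i j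
  proof -
    have "cnj (a * v i + b * w i) * E i j * (a * v j + b * w j)
        - cnj (a * v i - b * w i) * E i j * (a * v j - b * w j)
        = 2 * (complex_of_real a * complex_of_real b) * (cnj (v i) * E i j * w j + cnj (w i) * E i j * v j)"
      by (simp add: algebra_simps)
    then show ?thesis unfolding ab by (simp add: algebra_simps)
  qed
  then show ?thesis unfolding quad_form_def
    by (simp only: sum.distrib sum_subtractf sum_divide_distrib[symmetric])
qed

lemma square_of_sum_le: "(p + q)\<^sup>2 \<le> 2 * p\<^sup>2 + 2 * (q::real)\<^sup>2"
  using sum_squares_bound[of p q] by (simp add: power2_eq_square algebra_simps)

lemma norm2_on_lincomb_le:
  fixes a b :: real and v w :: "'a \<Rightarrow> complex"
  shows "norm2_on I (\<lambda>i. a * v i - b * w i) \<le> 2 * a\<^sup>2 * norm2_on I v + 2 * b\<^sup>2 * norm2_on I w"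
proof -
  have "(cmod (a * v i - b * w i))\<^sup>2 \<le> 2 * a\<^sup>2 * (cmod (v i))\<^sup>2 + 2 * b\<^sup>2 * (cmod (w i))\<^sup>2" for i
  proof -
    have "cmod (a * v i - b * w i) \<le> \<bar>a\<bar> * cmod (v i) + \<bar>b\<bar> * cmod (w i)"
      using norm_triangle_ineq4[of "a * v i" "b * w i"] by (simp add: norm_mult)
    then have "(cmod (a * v i - b * w i))\<^sup>2 \<le> (\<bar>a\<bar> * cmod (v i) + \<bar>b\<bar> * cmod (w i))\<^sup>2"
      by (simp add: power_mono)
    also have "\<dots> \<le> 2 * a\<^sup>2 * (cmod (v i))\<^sup>2 + 2 * b\<^sup>2 * (cmod (w i))\<^sup>2"
      using square_of_sum_le[of "\<bar>a\<bar> * cmod (v i)" "\<bar>b\<bar> * cmod (w i)"]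
      by (simp add: power_mult_distrib)
    finally show ?thesis .
  qed
  then have "norm2_on I (\<lambda>i. a * v i - b * w i)
      \<le> (\<Sum>i\<in>I. 2 * a\<^sup>2 * (cmod (v i))\<^sup>2 + 2 * b\<^sup>2 * (cmod (w i))\<^sup>2)"
    unfolding norm2_on_def by (rule sum_mono)
  also have "\<dots> = 2 * a\<^sup>2 * norm2_on I v + 2 * b\<^sup>2 * norm2_on I w"
    unfolding norm2_on_def by (simp add: sum.distrib sum_distrib_left)
  finally show ?thesis .
qed

text \<open>A substitute for the Cauchy-Schwarz bound |<v,Ev> - <w,Ew>| \<le> 2 ||v|| ||v - w||:
polarize the cross term with weights a and 1/a and drop the two nonnegative terms.\<close>
lemma quad_form_diff_le:
  fixes a :: real and v w :: "'a \<Rightarrow> complex"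
  assumes nonneg: "\<And>x. 0 \<le> Re (quad_form I E x)"
    and le_norm2: "\<And>x. Re (quad_form I E x) \<le> norm2_on I x"
    and "a \<noteq> 0"
  shows "Re (quad_form I E v) - Re (quad_form I E w)
           \<le> a\<^sup>2 * norm2_on I v + norm2_on I (\<lambda>i. w i - v i) / a\<^sup>2"
proof -
  define e where "e = (\<lambda>i. w i - v i)"
  define b where "b = 1 / a"
  let ?Q = "\<lambda>x. Re (quad_form I E x)"
  have "quad_form I E w = quad_form I E v + quad_form I E e +
     (quad_form I E (\<lambda>i. a * v i + b * e i) - quad_form I E (\<lambda>i. a * v i - b * e i)) / 2"
    using quad_form_polarization[of a b I E v e] \<open>a \<noteq> 0\<close> by (simp add: b_def e_def)
  then have "?Q v - ?Q w = ?Q (\<lambda>i. a * v i - b * e i) / 2 - ?Q e - ?Q (\<lambda>i. a * v i + b * e i) / 2"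
    by (simp add: diff_divide_distrib)
  also have "\<dots> \<le> norm2_on I (\<lambda>i. a * v i - b * e i) / 2"
    using nonneg[of e] nonneg[of "\<lambda>i. a * v i + b * e i"] le_norm2[of "\<lambda>i. a * v i - b * e i"]
    by linarith
  also have "\<dots> \<le> a\<^sup>2 * norm2_on I v + b\<^sup>2 * norm2_on I e"
    using norm2_on_lincomb_le[of I a v b e] by simp
  finally show ?thesis by (simp add: b_def e_def power_one_over)
qed

lemma quad_form_add:
  assumes "\<And>i j. i \<in> I \<Longrightarrow> j \<in> I \<Longrightarrow> C i j = A i j + B i j"
  shows "quad_form I C x = quad_form I A x + quad_form I B x"
  unfolding quad_form_def by (simp add: assms algebra_simps sum.distrib cong: sum.cong)

lemma quad_form_identity:
  assumes "finite I" "\<And>i j. i \<in> I \<Longrightarrow> j \<in> I \<Longrightarrow> E i j = (if i = j then 1 else 0)"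
  shows "quad_form I E x = inner_on I x x"
proof -
  have "(\<Sum>j\<in>I. cnj (x i) * E i j * x j) = cnj (x i) * x i" if "i \<in> I" for i
  proof -
    have "(\<Sum>j\<in>I. cnj (x i) * E i j * x j) = (\<Sum>j\<in>I. if i = j then cnj (x i) * x j else 0)"
      by (rule sum.cong) (simp_all add: assms(2) that)
    then show ?thesis using assms(1) that by simp
  qed
  then show ?thesis unfolding quad_form_def inner_on_def by simp
qed

lemma outcome_prob_eq_quad_form:
  "outcome_prob d n M w A = Re (quad_form (idx d n) (M A) w)"
  unfolding outcome_prob_def quad_form_def ..

lemma finite_idx: "finite (idx d n)"
proof -
  have "idx d n = {xs. set xs \<subseteq> {..<d} \<and> length xs = n}" unfolding idx_def by auto
  then show ?thesis using finite_lists_length_eq[of "{..<d}" n] by simp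
qed

lemma povm_outcome_prob_nonneg:
  assumes "povm d n M" "A \<in> sets borel"
  shows "0 \<le> outcome_prob d n M w A"
  using assms unfolding povm_def psd_on_def outcome_prob_def by blast

lemma povm_outcome_prob_disjoint_le:
  assumes M: "povm d n M" and A: "A \<in> sets borel" and B: "B \<in> sets borel" and "A \<inter> B = {}"
  shows "outcome_prob d n M w A + outcome_prob d n M w B \<le> norm2_on (idx d n) w"
proof -
  let ?P = "outcome_prob d n M w"
  have AB: "A \<union> B \<in> sets borel" using A B by simp
  have additive: "\<And>X Y. X \<in> sets borel \<Longrightarrow> Y \<in> sets borel \<Longrightarrow> X \<inter> Y = {} \<Longrightarrow>
      ?P (X \<union> Y) = ?P X + ?P Y"
    using M unfolding povm_def outcome_prob_eq_quad_form
    by (subst quad_form_add[of _ _ "M _" "M _"]) auto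
  have "?P UNIV = norm2_on (idx d n) w"
    using M unfolding povm_def outcome_prob_eq_quad_form
    by (subst quad_form_identity[OF finite_idx]) (auto simp: inner_on_self)
  moreover have "?P UNIV = ?P (A \<union> B) + ?P (- (A \<union> B))"
    using additive[OF AB borel_comp[OF AB]] by (metis Compl_disjoint Compl_partition)
  moreover have "?P (A \<union> B) = ?P A + ?P B"
    using additive[OF A B \<open>A \<inter> B = {}\<close>] .
  ultimately show ?thesis
    using povm_outcome_prob_nonneg[OF M borel_comp[OF AB], of w] by linarith
qed

lemma povm_outcome_prob_le:
  assumes "povm d n M" "A \<in> sets borel"
  shows "outcome_prob d n M w A \<le> norm2_on (idx d n) w"
  using povm_outcome_prob_disjoint_le[OF assms, of "{}" w] povm_outcome_prob_nonneg[OF assms(1), of "{}" w]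
  by simp

lemma povm_outcome_prob_diff_le:
  fixes a :: real
  assumes "povm d n M" "A \<in> sets borel" "a \<noteq> 0"
  shows "outcome_prob d n M w A - outcome_prob d n M w' A
           \<le> a\<^sup>2 * norm2_on (idx d n) w + norm2_on (idx d n) (\<lambda>i. w' i - w i) / a\<^sup>2"
  unfolding outcome_prob_eq_quad_form
  by (rule quad_form_diff_le)
    (use assms povm_outcome_prob_nonneg povm_outcome_prob_le in \<open>simp_all add: outcome_prob_eq_quad_form\<close>)

lemma idx_Suc: "idx d (Suc n) = (\<lambda>(i, l). i # l) ` ({..<d} \<times> idx d n)"
proof (rule set_eqI)
  fix l
  show "l \<in> idx d (Suc n) \<longleftrightarrow> l \<in> (\<lambda>(i, l). i # l) ` ({..<d} \<times> idx d n)"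
  proof
    assume "l \<in> idx d (Suc n)"
    then obtain i l' where "l = i # l'" "length l' = n" "i < d" "set l' \<subseteq> {..<d}"
      unfolding idx_def by (cases l) auto
    then show "l \<in> (\<lambda>(i, l). i # l) ` ({..<d} \<times> idx d n)" unfolding idx_def by force
  qed (auto simp: idx_def)
qed

lemma sum_idx_prod_nth:
  fixes f :: "nat \<Rightarrow> nat \<Rightarrow> 'a::comm_semiring_1"
  shows "(\<Sum>l\<in>idx d n. \<Prod>k<n. f k (l ! k)) = (\<Prod>k<n. \<Sum>i<d. f k i)"
proof (induction n arbitrary: f)
  case 0
  have "idx d 0 = {[]}" unfolding idx_def by auto
  then show ?case by simp
next
  case (Suc n)
  have inj: "inj_on (\<lambda>(i, l). i # l) ({..<d} \<times> idx d n)" by (auto simp: inj_on_def)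
  have "(\<Sum>l\<in>idx d (Suc n). \<Prod>k<Suc n. f k (l ! k))
      = (\<Sum>(i, l)\<in>{..<d} \<times> idx d n. \<Prod>k<Suc n. f k ((i # l) ! k))"
    unfolding idx_Suc by (subst sum.reindex[OF inj]) (simp add: case_prod_unfold)
  also have "\<dots> = (\<Sum>i<d. f 0 i * (\<Sum>l\<in>idx d n. \<Prod>k<n. f (Suc k) (l ! k)))"
    by (simp only: sum.cartesian_product[symmetric] prod.lessThan_Suc_shift nth_Cons_0 nth_Cons_Suc
        sum_distrib_left)
  also have "\<dots> = (\<Prod>k<Suc n. \<Sum>i<d. f k i)"
    by (simp only: Suc.IH[of "\<lambda>k. f (Suc k)"] prod.lessThan_Suc_shift sum_distrib_right)
  finally show ?case .
qed

lemma prod_lessThan_add: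
  fixes f :: "nat \<Rightarrow> 'a::comm_monoid_mult"
  shows "(\<Prod>k<m + n. f k) = (\<Prod>k<m. f k) * (\<Prod>k<n. f (m + k))"
  by (induction n) (simp_all add: mult.assoc)

lemma copies_state_eq_prod:
  "copies_state S u v l = (\<Prod>k<2 * S. (if k < S then u else v) (l ! k))"
  unfolding copies_state_def mult_2 prod_lessThan_add by simp

lemma inner_on_copies_state:
  "inner_on (idx d (2 * S)) (copies_state S u v) (copies_state S u' v')
     = inner_d d u u' ^ S * inner_d d v v' ^ S"
proof -
  have "inner_on (idx d (2 * S)) (copies_state S u v) (copies_state S u' v')
      = (\<Sum>l\<in>idx d (2 * S). \<Prod>k<2 * S.
           cnj ((if k < S then u else v) (l ! k)) * (if k < S then u' else v') (l ! k))"
    unfolding inner_on_def copies_state_eq_prod by (simp add: prod.distrib)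
  also have "\<dots> = (\<Prod>k<2 * S. \<Sum>i<d. cnj ((if k < S then u else v) i) * (if k < S then u' else v') i)"
    by (rule sum_idx_prod_nth)
  also have "\<dots> = (\<Prod>k<2 * S. if k < S then inner_d d u u' else inner_d d v v')"
    unfolding inner_d_def by (rule prod.cong) auto
  also have "\<dots> = inner_d d u u' ^ S * inner_d d v v' ^ S"
    unfolding mult_2 prod_lessThan_add by simp
  finally show ?thesis .
qed

lemma unit_state_inner_self: "unit_state d u \<Longrightarrow> inner_d d u u = 1"
  using inner_on_self[of "{..<d}" u] unfolding unit_state_def inner_d_def inner_on_def norm2_on_def
  by simp

lemma trace_dist_self: "unit_state d u \<Longrightarrow> trace_dist d u u = 0"
  unfolding trace_dist_def by (simp add: unit_state_inner_self)

lemma norm2_on_copies_state: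
  assumes "unit_state d u" "unit_state d v"
  shows "norm2_on (idx d (2 * S)) (copies_state S u v) = 1"
  using inner_on_self[of "idx d (2 * S)" "copies_state S u v"]
  unfolding inner_on_copies_state unit_state_inner_self[OF assms(1)] unit_state_inner_self[OF assms(2)]
  by simp

lemma sum_lessThan_supported_0_1:
  fixes f :: "nat \<Rightarrow> 'a::comm_monoid_add"
  assumes "2 \<le> d" "\<And>i. 2 \<le> i \<Longrightarrow> f i = 0"
  shows "(\<Sum>i<d. f i) = f 0 + f 1"
proof -
  have "(\<Sum>i\<in>{0, 1}. f i) = (\<Sum>i<d. f i)"
    by (rule sum.mono_neutral_left) (use assms in auto)
  then show ?thesis by simp
qed

lemma exists_unit_states_with_overlap:
  assumes "2 \<le> d" "0 \<le> c" "c \<le> 1"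
  obtains u v where "unit_state d u" "unit_state d v" "inner_d d u v = of_real c"
proof
  define s where "s = sqrt (1 - c\<^sup>2)"
  have cs: "c\<^sup>2 + s\<^sup>2 = 1" unfolding s_def using assms by (simp add: power_le_one)
  let ?u = "\<lambda>i. if i = 0 then 1 else 0 :: complex"
  let ?v = "\<lambda>i. if i = 0 then of_real c else if i = 1 then of_real s else 0 :: complex"
  show "unit_state d ?u" unfolding unit_state_def
    by (subst sum_lessThan_supported_0_1[OF assms(1)]) simp_all
  show "unit_state d ?v" unfolding unit_state_def
    by (subst sum_lessThan_supported_0_1[OF assms(1)]) (simp_all add: cs)
  show "inner_d d ?u ?v = of_real c" unfolding inner_d_def
    by (subst sum_lessThan_supported_0_1[OF assms(1)]) simp_all
qed

lemma td_estimator_overlap_le: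
  assumes est: "td_estimator d S eps M"
    and units: "unit_state d u" "unit_state d v" "unit_state d u'" "unit_state d v'"
    and far: "2 * eps < \<bar>trace_dist d u v - trace_dist d u' v'\<bar>"
  shows "Re (inner_d d u u' ^ S * inner_d d v v' ^ S) \<le> 80 / 81"
proof -
  define \<Phi> where "\<Phi> = copies_state S u v"
  define \<Psi> where "\<Psi> = copies_state S u' v'"
  define A where "A = {x. \<bar>x - trace_dist d u v\<bar> \<le> eps}"
  define B where "B = {x. \<bar>x - trace_dist d u' v'\<bar> \<le> eps}"
  let ?P = "outcome_prob d (2 * S) M"
  let ?N = "norm2_on (idx d (2 * S))"
  have M: "povm d (2 * S) M" using est unfolding td_estimator_def by simp
  have interval_borel: "{x. \<bar>x - t\<bar> \<le> eps} \<in> sets borel" for t :: real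
  proof -
    have "{x. \<bar>x - t\<bar> \<le> eps} = cball t eps" by (auto simp: cball_def dist_real_def)
    then show ?thesis by (simp add: borel_closed)
  qed
  have "A \<inter> B = {}" using far unfolding A_def B_def by auto
  have P\<Phi>: "?P \<Phi> A \<ge> 2 / 3" and P\<Psi>: "?P \<Psi> B \<ge> 2 / 3"
    using est units unfolding td_estimator_def A_def B_def \<Phi>_def \<Psi>_def by blast+
  have N\<Phi>: "?N \<Phi> = 1" and N\<Psi>: "?N \<Psi> = 1"
    unfolding \<Phi>_def \<Psi>_def using units by (simp_all add: norm2_on_copies_state)
  have "?P \<Psi> A \<le> 1 / 3"
    using povm_outcome_prob_disjoint_le[OF M _ _ \<open>A \<inter> B = {}\<close>, of \<Psi>] interval_borel P\<Psi> N\<Psi>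
    unfolding A_def B_def by fastforce
  moreover have "?P \<Phi> A - ?P \<Psi> A \<le> (1/3)\<^sup>2 * ?N \<Phi> + ?N (\<lambda>i. \<Psi> i - \<Phi> i) / (1/3)\<^sup>2"
    using povm_outcome_prob_diff_le[OF M, of A "1/3"] interval_borel unfolding A_def by simp
  moreover have "?N (\<lambda>i. \<Psi> i - \<Phi> i) = 2 - 2 * Re (inner_d d u u' ^ S * inner_d d v v' ^ S)"
    unfolding norm2_on_diff N\<Phi> N\<Psi> unfolding \<Phi>_def \<Psi>_def inner_on_copies_state by simp
  ultimately show ?thesis using P\<Phi> N\<Phi> by (simp add: power2_eq_square)
qed

lemma one_minus_power_le:
  fixes x :: real
  assumes "0 \<le> x" "x \<le> 1"
  shows "1 - x ^ n \<le> real n * (1 - x)"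
proof (induction n)
  case (Suc n)
  have "x ^ n * (1 - x) \<le> 1 - x"
    using assms mult_right_mono[of "x ^ n" 1 "1 - x"] by (simp add: power_le_one)
  then show ?case using Suc by (simp add: algebra_simps)
qed simp

lemma one_minus_sqrt_one_minus_le:
  fixes y :: real
  assumes "0 \<le> y" "y \<le> 1"
  shows "1 - sqrt (1 - y) \<le> y"
proof -
  have "sqrt (1 - y) * sqrt (1 - y) \<le> sqrt (1 - y) * 1"
    using assms by (intro mult_left_mono) simp_all
  then show ?thesis using assms by simp
qed

theorem theoremB2:
  "\<exists>c > 0. \<forall>eps d S M. 0 < eps \<longrightarrow> eps < 1 / 2 \<longrightarrow> 2 \<le> d \<longrightarrow>
      td_estimator d S eps M \<longrightarrow> real S \<ge> c / eps\<^sup>2"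
proof (intro exI[of _ "1 / 1296"] conjI allI impI)
  fix eps :: real and d S M
  assume eps: "0 < eps" "eps < 1 / 2" and "2 \<le> d" and est: "td_estimator d S eps M"
  \<comment> \<open>any s with 2 eps < s \<le> min 1 (4 eps) would do\<close>
  define s where "s = 4 * eps / (1 + 2 * eps)"
  define c where "c = sqrt (1 - s\<^sup>2)"
  have s: "2 * eps < s" "s < 1" "s \<le> 4 * eps"
    unfolding s_def using eps by (simp_all add: field_simps)
  have s2: "s\<^sup>2 \<le> 1" using s eps by (simp add: abs_square_le_1)
  obtain u v where u: "unit_state d u" and v: "unit_state d v" and uv: "inner_d d u v = of_real c"
    using exists_unit_states_with_overlap[OF \<open>2 \<le> d\<close>, of c] s2 unfolding c_def by auto
  have "trace_dist d u v = s"
    unfolding trace_dist_def uv c_def using s s2 eps by simp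
  then have "c ^ S \<le> 80 / 81"
    using td_estimator_overlap_le[OF est u u u v] trace_dist_self[OF u] s
    by (simp add: unit_state_inner_self[OF u] uv)
  then have "1 / 81 \<le> real S * (1 - c)"
    using one_minus_power_le[of c S] s2 unfolding c_def by simp
  also have "\<dots> \<le> real S * (16 * eps\<^sup>2)"
  proof (rule mult_left_mono)
    have "1 - c \<le> s\<^sup>2" unfolding c_def using one_minus_sqrt_one_minus_le s2 by simp
    also have "\<dots> \<le> (4 * eps)\<^sup>2" using s eps by (intro power_mono) simp_all
    finally show "1 - c \<le> 16 * eps\<^sup>2" by simp
  qed simp
  finally show "1 / 1296 / eps\<^sup>2 \<le> real S" using eps by (simp add: field_simps)
qed simp

end
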